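(* Let $q>10$ be a prime power. There exist $\alpha\in\mathbb{F}_{q^3}\setminus\mathbb{F}_q$ and an $\mathbb{F}_q$-linear functional $f:\mathbb{F}_{q^3}\to\mathbb{F}_q$ such that, with $\beta=1$: (1) $f(\alpha/\beta)\neq 1$, and (2) for all $k\in\mathbb{F}_q$, $k\neq f\left(\frac{\alpha^2}{\beta}\right)+\left(f\left(\frac{\beta^2}{\alpha+k}\right)+k\right)f\left(\frac{\alpha}{\beta}\right)+k f\left(\frac{\beta^2}{\alpha+k}\right)f\left(\frac{1}{\beta}\right)$. *)

theory Defs
  imports "HOL-Computational_Algebra.Primes"
begin

text \<open>Ambient field F_{q^3}: a finite field type of cardinality q^3.
  Its subfield F_q is the set of elements fixed by the q-power Frobenius map.\<close>

definition base_subfield :: "nat \<Rightarrow> 'a::field set" where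
  "base_subfield q = {x. x ^ q = x}"

definition prime_power :: "nat \<Rightarrow> bool" where
  "prime_power q \<longleftrightarrow> (\<exists>p k. prime p \<and> k > 0 \<and> q = p ^ k)"

definition fq_linear_functional :: "nat \<Rightarrow> ('a::field \<Rightarrow> 'a) \<Rightarrow> bool" where
  "fq_linear_functional q f \<longleftrightarrow>
     (\<forall>x. f x \<in> base_subfield q) \<and>
     (\<forall>x y. f (x + y) = f x + f y) \<and>
     (\<forall>c x. c \<in> base_subfield q \<longrightarrow> f (c * x) = c * f x)"

end

theory Submission
  imports Defs "HOL-Computational_Algebra.Polynomial" "HOL-Number_Theory.Residues"
begin

(* Write c = f 1, t = f alpha and s = f (alpha^2) for a functional f that is linear over the
  fixed field F of sigma (the Frobenius, of order 3). Since Nm (alpha + k) / (alpha + k) equals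
  alpha^2 - (e1 + k) alpha + (k^2 + e1 k + e2) with coefficients in F, linearity expresses
  f (1 / (alpha + k)) through c, t, s, and Nm (alpha + k) times the difference of the two sides
  of (2) becomes s * defect_slope k + defect_offset k, where
  defect_slope k = Nm (alpha + k) + t + k c.
  Taking t = - Nm (alpha + k0) - k0 c makes defect_slope vanish at k0, so the other k exclude at
  most |F| - 1 values of s. At a root k of defect_slope, defect_offset k is
  Nm (alpha + k) * offset_cofactor k. At k0 the cofactor is affine in c with slope -N'(k0),
  where N k = Nm (alpha + k); at any other root, c = - (N k - N k0) / (k - k0), which turns the
  cofactor into a quartic in k. So at most six values of c are bad (one of them gives t = 1),
  and |F| = q > 10 leaves room. Functionals with arbitrary values on 1, alpha, alpha^2 are
  x \<mapsto> Tr (mu x), by Lagrange interpolation at the conjugates of alpha. *)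

lemma ex_in_diff_if_card_less:
  assumes "finite A" "card A < card B"
  shows "\<exists>x\<in>B. x \<notin> A"
  using assms card_mono not_le by blast

lemma card_roots_monic_le:
  fixes p :: "'a::idom poly"
  assumes "degree p < n"
  shows "card {x. x ^ n + poly p x = 0} \<le> n"
proof -
  have deg: "degree (Polynomial.monom 1 n + p) = n"
    using assms by (simp add: degree_add_eq_left degree_monom_eq)
  then have "Polynomial.monom 1 n + p \<noteq> 0"
    using assms by auto
  then show ?thesis
    using card_poly_roots_bound deg by (fastforce simp: poly_monom)
qed

lemma power_card_UNIV_eq_self:
  fixes x :: "'a::{field,finite}"
  shows "x ^ card (UNIV :: 'a set) = x"
proof (cases "x = 0")
  case True
  then show ?thesis
    by (simp add: finite_UNIV_card_ge_0)
next
  case False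
  define U where "U = UNIV - {0::'a}"
  have "inj_on ((*) x) U" "(*) x ` U = U"
    using False unfolding U_def
    by (auto intro!: inj_onI image_eqI[where x = "y / x" for y])
  then have "(\<Prod>y\<in>U. x * y) = \<Prod>U"
    using prod.reindex[of "(*) x" U id] by simp
  moreover have "(\<Prod>y\<in>U. x * y) = x ^ card U * \<Prod>U"
    by (simp add: prod.distrib)
  moreover have "\<Prod>U \<noteq> 0"
    unfolding U_def by simp
  ultimately have "x ^ card U = 1"
    by simp
  moreover have "card (UNIV :: 'a set) = Suc (card U)"
    using finite_UNIV_card_ge_0[where 'a = 'a] unfolding U_def by (simp add: card_Diff_singleton_if)
  ultimately show ?thesis
    by simp
qed

lemma CHAR_eq_if_card_eq_prime_power:
  assumes "prime p" "n > 0" "card (UNIV :: 'a::{field,finite} set) = p ^ n"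
  shows "CHAR('a) = p"
proof -
  have "prime CHAR('a)"
    by (simp add: finite_imp_CHAR_pos prime_CHAR_semidom)
  moreover have "CHAR('a) dvd p ^ n"
    using CHAR_dvd_CARD[where 'a = 'a] assms(3) by simp
  ultimately show ?thesis
    using assms(1) prime_dvd_power primes_dvd_imp_eq by blast
qed

lemma lagrange_weights_sums:
  fixes a b d c t s :: "'a::field"
  assumes "a \<noteq> b" "b \<noteq> d" "d \<noteq> a"
  defines "w x y z \<equiv> (s - t * (y + z) + c * y * z) / ((x - y) * (x - z))"
  shows "w a b d + w b d a + w d a b = c"
    and "w a b d * a + w b d a * b + w d a b * d = t"
    and "w a b d * a\<^sup>2 + w b d a * b\<^sup>2 + w d a b * d\<^sup>2 = s"
proof -
  have "b \<noteq> a" "d \<noteq> b" "a \<noteq> d"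
    using assms by auto
  with assms(1-3) show "w a b d + w b d a + w d a b = c"
    and "w a b d * a + w b d a * b + w d a b * d = t"
    and "w a b d * a\<^sup>2 + w b d a * b\<^sup>2 + w d a b * d\<^sup>2 = s"
    unfolding w_def by (simp_all add: divide_simps) (simp_all add: algebra_simps power2_eq_square)
qed

lemma ex_pencil_nonvanishing:
  fixes L G :: "'a \<Rightarrow> 'a::field"
  assumes "finite S" "k\<^sub>0 \<in> S" "L k\<^sub>0 = 0" "\<And>k. k \<in> S \<Longrightarrow> L k = 0 \<Longrightarrow> G k \<noteq> 0"
  shows "\<exists>s\<in>S. \<forall>k\<in>S. s * L k + G k \<noteq> 0"
proof -
  define B where "B = (\<lambda>k. - G k / L k) ` (S - {k\<^sub>0})"
  have "card B \<le> card (S - {k\<^sub>0})"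
    unfolding B_def using assms(1) by (intro card_image_le) simp
  also have "\<dots> < card S"
    using assms(1,2) by (rule card_Diff1_less)
  finally have "card B < card S" .
  moreover have "finite B"
    unfolding B_def using assms(1) by simp
  ultimately obtain s where s: "s \<in> S" "s \<notin> B"
    using ex_in_diff_if_card_less by blast
  have "s * L k + G k \<noteq> 0" if "k \<in> S" for k
  proof (cases "L k = 0")
    case True
    then show ?thesis
      using assms(4) that by simp
  next
    case False
    then have "k \<noteq> k\<^sub>0"
      using assms(3) by auto
    then have "s \<noteq> - G k / L k"
      using s that unfolding B_def by auto
    then show ?thesis
      using False by (simp add: field_simps add_eq_0_iff)
  qed
  then show ?thesis
    using s by blast
qed

locale order3_automorphism =
  fixes \<sigma> :: "'a::field \<Rightarrow> 'a"
  assumes add: "\<sigma> (x + y) = \<sigma> x + \<sigma> y"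
    and mult: "\<sigma> (x * y) = \<sigma> x * \<sigma> y"
    and one: "\<sigma> 1 = 1"
    and order3: "\<sigma> (\<sigma> (\<sigma> x)) = x"
begin

lemma zero [simp]: "\<sigma> 0 = 0"
proof -
  have "\<sigma> 0 + \<sigma> 0 = \<sigma> 0 + 0"
    using add[of 0 0] by simp
  then show ?thesis
    by (rule add_left_imp_eq)
qed

lemma minus: "\<sigma> (- x) = - \<sigma> x"
  using add[of x "- x"] by (simp add: eq_neg_iff_add_eq_0 add.commute)

lemma diff: "\<sigma> (x - y) = \<sigma> x - \<sigma> y"
  using add[of x "- y"] by (simp add: minus)

lemma eq_iff [simp]: "\<sigma> x = \<sigma> y \<longleftrightarrow> x = y"
  by (metis order3)

lemma eq_0_iff [simp]: "\<sigma> x = 0 \<longleftrightarrow> x = 0"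
  using eq_iff[of x 0] by simp

lemma inverse: "\<sigma> (inverse x) = inverse (\<sigma> x)"
proof (cases "x = 0")
  case False
  then have "\<sigma> x * \<sigma> (inverse x) = 1"
    using mult[of x "inverse x"] by (simp add: one)
  then show ?thesis
    by (simp add: inverse_unique)
qed simp

lemma divide: "\<sigma> (x / y) = \<sigma> x / \<sigma> y"
  by (simp add: divide_inverse mult inverse)

lemma power: "\<sigma> (x ^ n) = \<sigma> x ^ n"
  by (induction n) (simp_all add: one mult)

lemmas hom_simps = add mult one minus diff divide power order3

definition Tr :: "'a \<Rightarrow> 'a" where
  "Tr x = x + \<sigma> x + \<sigma> (\<sigma> x)"

definition Nm :: "'a \<Rightarrow> 'a" where
  "Nm x = x * \<sigma> x * \<sigma> (\<sigma> x)"

lemma Tr_fixed: "\<sigma> (Tr x) = Tr x"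
  unfolding Tr_def by (simp add: hom_simps add_ac)

lemma Nm_fixed: "\<sigma> (Nm x) = Nm x"
  unfolding Nm_def by (simp add: hom_simps mult_ac)

lemma Nm_eq_0_iff: "Nm x = 0 \<longleftrightarrow> x = 0"
  unfolding Nm_def by simp

definition fixed_linear :: "('a \<Rightarrow> 'a) \<Rightarrow> bool" where
  "fixed_linear f \<longleftrightarrow> (\<forall>x. \<sigma> (f x) = f x) \<and> (\<forall>x y. f (x + y) = f x + f y)
     \<and> (\<forall>c x. \<sigma> c = c \<longrightarrow> f (c * x) = c * f x)"

lemma Tr_add: "Tr (x + y) = Tr x + Tr y"
  unfolding Tr_def by (simp add: add ac_simps)

lemma Tr_mult_fixed: "\<sigma> c = c \<Longrightarrow> Tr (c * x) = c * Tr x"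
  unfolding Tr_def by (simp add: mult distrib_left)

lemma fixed_linear_Tr_mult: "fixed_linear (\<lambda>x. Tr (\<mu> * x))"
  unfolding fixed_linear_def
  by (simp add: Tr_fixed Tr_add Tr_mult_fixed distrib_left mult.left_commute[of \<mu>])

(* x \<mapsto> \<sigma> x - x has the fixed field as kernel and its image in the kernel of Tr. *)
lemma card_UNIV_le_card_fixed_times_card_Tr_kernel:
  assumes "finite (UNIV :: 'a set)"
  shows "card (UNIV :: 'a set) \<le> card {x. \<sigma> x = x} * card {y. Tr y = 0}"
proof -
  define s where "s y = (SOME x. \<sigma> x - x = y)" for y
  have s: "\<sigma> (s (\<sigma> x - x)) - s (\<sigma> x - x) = \<sigma> x - x" for x
    unfolding s_def by (rule someI[of _ x]) (rule refl)
  define g where "g x = (x - s (\<sigma> x - x), \<sigma> x - x)" for x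
  have "inj g"
    unfolding g_def by (rule injI) auto
  have "\<sigma> (x - s (\<sigma> x - x)) = x - s (\<sigma> x - x)" for x
    using s[of x] by (simp add: diff algebra_simps)
  moreover have "Tr (\<sigma> x - x) = 0" for x
    unfolding Tr_def by (simp add: diff order3)
  ultimately have range_g: "range g \<subseteq> {x. \<sigma> x = x} \<times> {y. Tr y = 0}"
    unfolding g_def by auto
  have fin: "finite A" for A :: "'a set"
    using finite_subset[OF subset_UNIV assms] .
  have "card (UNIV :: 'a set) = card (range g)"
    using \<open>inj g\<close> by (simp add: card_image)
  also have "\<dots> \<le> card ({x. \<sigma> x = x} \<times> {y. Tr y = 0})"
    using range_g by (intro card_mono finite_SigmaI fin)
  finally show ?thesis
    by (simp add: card_cartesian_product)
qed

end

locale order3_automorphism_nonfixed = order3_automorphism +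
  fixes \<alpha> :: 'a
  assumes nonfixed: "\<sigma> \<alpha> \<noteq> \<alpha>"
begin

abbreviation "\<alpha>\<^sub>2 \<equiv> \<sigma> \<alpha>"
abbreviation "\<alpha>\<^sub>3 \<equiv> \<sigma> (\<sigma> \<alpha>)"

lemma conjugates_distinct: "\<alpha> \<noteq> \<alpha>\<^sub>2" "\<alpha>\<^sub>2 \<noteq> \<alpha>\<^sub>3" "\<alpha>\<^sub>3 \<noteq> \<alpha>"
proof -
  show "\<alpha> \<noteq> \<alpha>\<^sub>2" "\<alpha>\<^sub>2 \<noteq> \<alpha>\<^sub>3"
    using nonfixed by auto
  show "\<alpha>\<^sub>3 \<noteq> \<alpha>"
  proof
    assume "\<alpha>\<^sub>3 = \<alpha>"
    then have "\<sigma> \<alpha>\<^sub>3 = \<alpha>\<^sub>2"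
      by (rule arg_cong)
    then show False
      using nonfixed by (simp add: order3)
  qed
qed

lemma shift_ne_0: "\<sigma> k = k \<Longrightarrow> \<alpha> + k \<noteq> 0"
  using nonfixed by (metis add_eq_0_iff2 minus)

definition e1 :: 'a where
  "e1 = \<alpha> + \<alpha>\<^sub>2 + \<alpha>\<^sub>3"

definition e2 :: 'a where
  "e2 = \<alpha> * \<alpha>\<^sub>2 + \<alpha>\<^sub>2 * \<alpha>\<^sub>3 + \<alpha>\<^sub>3 * \<alpha>"

lemma e1_fixed: "\<sigma> e1 = e1" and e2_fixed: "\<sigma> e2 = e2"
  unfolding e1_def e2_def by (simp_all add: hom_simps ac_simps)

lemma ex_fixed_linear_with_values:
  assumes "\<sigma> c = c" "\<sigma> t = t" "\<sigma> s = s"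
  shows "\<exists>f. fixed_linear f \<and> f 1 = c \<and> f \<alpha> = t \<and> f (\<alpha>\<^sup>2) = s"
proof -
  define w where "w x y z = (s - t * (y + z) + c * y * z) / ((x - y) * (x - z))" for x y z
  define f where "f x = Tr (w \<alpha> \<alpha>\<^sub>2 \<alpha>\<^sub>3 * x)" for x
  have "\<sigma> (w x y z) = w (\<sigma> x) (\<sigma> y) (\<sigma> z)" for x y z
    using assms by (simp add: w_def hom_simps)
  then have f_eq: "f x = w \<alpha> \<alpha>\<^sub>2 \<alpha>\<^sub>3 * x + w \<alpha>\<^sub>2 \<alpha>\<^sub>3 \<alpha> * \<sigma> x + w \<alpha>\<^sub>3 \<alpha> \<alpha>\<^sub>2 * \<sigma> (\<sigma> x)" for x
    by (simp add: f_def Tr_def mult order3)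
  have "fixed_linear f"
    unfolding f_def by (rule fixed_linear_Tr_mult)
  moreover have "f 1 = c" "f \<alpha> = t" "f (\<alpha>\<^sup>2) = s"
    using lagrange_weights_sums[OF conjugates_distinct, of s t c]
    by (simp_all add: f_eq w_def one power order3)
  ultimately show ?thesis
    by blast
qed

lemma Nm_shift: "\<sigma> k = k \<Longrightarrow> Nm (\<alpha> + k) = (\<alpha> + k) * ((\<alpha>\<^sub>2 + k) * (\<alpha>\<^sub>3 + k))"
  unfolding Nm_def by (simp add: add mult_ac)

lemma Nm_shift_ne_0: "\<sigma> k = k \<Longrightarrow> Nm (\<alpha> + k) \<noteq> 0"
  using shift_ne_0 by (simp add: Nm_eq_0_iff)

lemma Nm_shift_eq_cubic:
  assumes "\<sigma> k = k"
  shows "Nm (\<alpha> + k) = k ^ 3 + e1 * k\<^sup>2 + e2 * k + Nm \<alpha>"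
  unfolding Nm_shift[OF assms]
  by (simp add: Nm_def e1_def e2_def algebra_simps power2_eq_square power3_eq_cube)

lemma Nm_shift_divide:
  assumes "\<sigma> k = k"
  shows "Nm (\<alpha> + k) / (\<alpha> + k) = \<alpha>\<^sup>2 - (e1 + k) * \<alpha> + (k\<^sup>2 + e1 * k + e2)"
proof -
  have "Nm (\<alpha> + k) / (\<alpha> + k) = (\<alpha>\<^sub>2 + k) * (\<alpha>\<^sub>3 + k)"
    using assms shift_ne_0 by (simp add: Nm_shift)
  then show ?thesis
    by (simp add: e1_def e2_def algebra_simps power2_eq_square)
qed

lemma fixed_linear_shift_inverse:
  assumes "fixed_linear f" "\<sigma> k = k"
  shows "Nm (\<alpha> + k) * f (1 / (\<alpha> + k)) = f (\<alpha>\<^sup>2) - (e1 + k) * f \<alpha> + (k\<^sup>2 + e1 * k + e2) * f 1"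
proof -
  have add: "f (x + y) = f x + f y" and hom: "\<sigma> c = c \<Longrightarrow> f (c * x) = c * f x" for c x y
    using assms(1) unfolding fixed_linear_def by blast+
  have diff: "f (x - y) = f x - f y" for x y
    using add[of "x - y" y] by simp
  have fixed: "\<sigma> (e1 + k) = e1 + k" "\<sigma> (k\<^sup>2 + e1 * k + e2) = k\<^sup>2 + e1 * k + e2"
    using assms(2) by (simp_all add: hom_simps e1_fixed e2_fixed)
  have "Nm (\<alpha> + k) * f (1 / (\<alpha> + k)) = f (Nm (\<alpha> + k) / (\<alpha> + k))"
    using hom[OF Nm_fixed, of "\<alpha> + k" "1 / (\<alpha> + k)"] by simp
  also have "\<dots> = f (\<alpha>\<^sup>2 - (e1 + k) * \<alpha> + (k\<^sup>2 + e1 * k + e2) * 1)"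
    using assms(2) by (simp add: Nm_shift_divide)
  also have "\<dots> = f (\<alpha>\<^sup>2) - (e1 + k) * f \<alpha> + (k\<^sup>2 + e1 * k + e2) * f 1"
    by (simp only: add diff hom fixed)
  finally show ?thesis .
qed

definition defect_slope :: "'a \<Rightarrow> 'a \<Rightarrow> 'a \<Rightarrow> 'a" where
  "defect_slope c t k = Nm (\<alpha> + k) + t + k * c"

definition defect_offset :: "'a \<Rightarrow> 'a \<Rightarrow> 'a \<Rightarrow> 'a" where
  "defect_offset c t k =
     (t - 1) * k * Nm (\<alpha> + k) + ((k\<^sup>2 + e1 * k + e2) * c - (e1 + k) * t) * (t + k * c)"

definition offset_cofactor :: "'a \<Rightarrow> 'a \<Rightarrow> 'a \<Rightarrow> 'a" where
  "offset_cofactor c t k = t * (e1 + 2 * k) - k - (k\<^sup>2 + e1 * k + e2) * c"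

lemma defect_eq:
  assumes "fixed_linear f" "\<sigma> k = k"
  defines "g \<equiv> f (1 / (\<alpha> + k))"
  shows "Nm (\<alpha> + k) * (f (\<alpha>\<^sup>2) + (g + k) * f \<alpha> + k * g * f 1 - k)
    = f (\<alpha>\<^sup>2) * defect_slope (f 1) (f \<alpha>) k + defect_offset (f 1) (f \<alpha>) k"
proof -
  have "Nm (\<alpha> + k) * (f (\<alpha>\<^sup>2) + (g + k) * f \<alpha> + k * g * f 1 - k)
    = Nm (\<alpha> + k) * f (\<alpha>\<^sup>2) + (f \<alpha> - 1) * k * Nm (\<alpha> + k) + (Nm (\<alpha> + k) * g) * (f \<alpha> + k * f 1)"
    by (simp add: algebra_simps)
  then show ?thesis
    unfolding g_def fixed_linear_shift_inverse[OF assms(1,2)] defect_slope_def defect_offset_def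
    by (simp add: algebra_simps)
qed

lemma defect_offset_at_root:
  assumes "defect_slope c t k = 0"
  shows "defect_offset c t k = Nm (\<alpha> + k) * offset_cofactor c t k"
proof -
  have "t + k * c = - Nm (\<alpha> + k)"
    using assms unfolding defect_slope_def by (simp add: algebra_simps eq_neg_iff_add_eq_0)
  then show ?thesis
    unfolding defect_offset_def offset_cofactor_def by (simp add: algebra_simps power2_eq_square)
qed

definition norm_slope :: "'a \<Rightarrow> 'a \<Rightarrow> 'a" where
  "norm_slope k\<^sub>0 k = k\<^sup>2 + k * k\<^sub>0 + k\<^sub>0\<^sup>2 + e1 * (k + k\<^sub>0) + e2"

lemma Nm_shift_diff:
  assumes "\<sigma> k = k" "\<sigma> k\<^sub>0 = k\<^sub>0"
  shows "Nm (\<alpha> + k) - Nm (\<alpha> + k\<^sub>0) = (k - k\<^sub>0) * norm_slope k\<^sub>0 k"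
  unfolding Nm_shift_eq_cubic[OF assms(1)] Nm_shift_eq_cubic[OF assms(2)] norm_slope_def
  by (simp add: algebra_simps power2_eq_square power3_eq_cube)

lemma ex_base_point:
  assumes "3 < card {x. \<sigma> x = x}"
  shows "\<exists>k\<^sub>0. \<sigma> k\<^sub>0 = k\<^sub>0 \<and> k\<^sub>0 \<noteq> 0 \<and> norm_slope k\<^sub>0 k\<^sub>0 \<noteq> 0"
proof -
  define P where "P = [:e2, 2 * e1, 3:]"
  have P_eq: "poly P k = norm_slope k k" for k
    unfolding P_def norm_slope_def by (simp add: algebra_simps power2_eq_square)
  have "poly P (- \<alpha>) = (\<alpha> - \<alpha>\<^sub>2) * (\<alpha> - \<alpha>\<^sub>3)"
    unfolding P_def e1_def e2_def by (simp add: algebra_simps)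
  then have "P \<noteq> 0"
    using conjugates_distinct by auto
  moreover have "degree P \<le> 2"
    unfolding P_def by simp
  ultimately have "finite {k. poly P k = 0}" "card {k. poly P k = 0} \<le> 2"
    using poly_roots_finite card_poly_roots_bound[of P] by (blast, linarith)
  then have "finite (insert 0 {k. poly P k = 0})" "card (insert 0 {k. poly P k = 0}) < card {x. \<sigma> x = x}"
    using assms by (simp_all add: card_insert_if)
  then obtain k\<^sub>0 where "\<sigma> k\<^sub>0 = k\<^sub>0" "k\<^sub>0 \<notin> insert 0 {k. poly P k = 0}"
    using ex_in_diff_if_card_less by blast
  then show ?thesis
    using P_eq by auto
qed

lemma offset_cofactor_zeros_along_slope:
  "finite {k. offset_cofactor (- norm_slope k\<^sub>0 k) (k\<^sub>0 * norm_slope k\<^sub>0 k - n) k = 0}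
   \<and> card {k. offset_cofactor (- norm_slope k\<^sub>0 k) (k\<^sub>0 * norm_slope k\<^sub>0 k - n) k = 0} \<le> 4"
proof -
  define S where "S = [:k\<^sub>0\<^sup>2 + e1 * k\<^sub>0 + e2, k\<^sub>0 + e1, 1:]"
  define Q where "Q = [:e2, e1, 1:]"
  define P where "P = S * Q + ([:k\<^sub>0:] * S - [:n:]) * [:e1, 2:] - [:0, 1:]"
  have "poly P k = offset_cofactor (- norm_slope k\<^sub>0 k) (k\<^sub>0 * norm_slope k\<^sub>0 k - n) k" for k
    unfolding P_def S_def Q_def offset_cofactor_def norm_slope_def
    by (simp add: algebra_simps power2_eq_square)
  moreover have "degree P = 4"
  proof -
    have "degree (S * Q) = 4"
      unfolding S_def Q_def by (subst degree_mult_eq) auto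
    moreover have "degree (([:k\<^sub>0:] * S - [:n:]) * [:e1, 2:] - [:0, 1:]) \<le> 3"
      unfolding S_def by (intro degree_diff_le order.trans[OF degree_mult_le]) auto
    ultimately show ?thesis
      unfolding P_def diff_conv_add_uminus add.assoc
      by (subst degree_add_eq_left) auto
  qed
  then have "P \<noteq> 0"
    by auto
  ultimately show ?thesis
    using poly_roots_finite[of P] card_poly_roots_bound[of P] \<open>degree P = 4\<close> by simp
qed

lemma defect_slope_through_base:
  assumes "\<sigma> k = k" "\<sigma> k\<^sub>0 = k\<^sub>0"
  shows "defect_slope c (- Nm (\<alpha> + k\<^sub>0) - k\<^sub>0 * c) k = (k - k\<^sub>0) * (norm_slope k\<^sub>0 k + c)"
  using Nm_shift_diff[OF assms] unfolding defect_slope_def by (simp add: algebra_simps)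

lemma offset_cofactor_at_base_eq_0_iff:
  assumes "norm_slope k\<^sub>0 k\<^sub>0 \<noteq> 0"
  shows "offset_cofactor c (- n - k\<^sub>0 * c) k\<^sub>0 = 0
    \<longleftrightarrow> c = - (n * (e1 + 2 * k\<^sub>0) + k\<^sub>0) / norm_slope k\<^sub>0 k\<^sub>0"
proof -
  have "offset_cofactor c (- n - k\<^sub>0 * c) k\<^sub>0 = - (c * norm_slope k\<^sub>0 k\<^sub>0 + (n * (e1 + 2 * k\<^sub>0) + k\<^sub>0))"
    unfolding offset_cofactor_def norm_slope_def by (simp add: algebra_simps power2_eq_square)
  then show ?thesis
    using assms by (auto simp: eq_divide_eq)
qed

lemma ex_value_at_one:
  assumes "7 < card {x. \<sigma> x = x}" "\<sigma> k\<^sub>0 = k\<^sub>0" "k\<^sub>0 \<noteq> 0" "norm_slope k\<^sub>0 k\<^sub>0 \<noteq> 0"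
  defines "t c \<equiv> - Nm (\<alpha> + k\<^sub>0) - k\<^sub>0 * c"
  shows "\<exists>c. \<sigma> c = c \<and> t c \<noteq> 1 \<and>
    (\<forall>k. \<sigma> k = k \<longrightarrow> defect_slope c (t c) k = 0 \<longrightarrow> offset_cofactor c (t c) k \<noteq> 0)"
proof -
  define n where "n = Nm (\<alpha> + k\<^sub>0)"
  define Z where "Z = {k. offset_cofactor (- norm_slope k\<^sub>0 k) (k\<^sub>0 * norm_slope k\<^sub>0 k - n) k = 0}"
  define B where "B = insert (- (n + 1) / k\<^sub>0) (insert (- (n * (e1 + 2 * k\<^sub>0) + k\<^sub>0) / norm_slope k\<^sub>0 k\<^sub>0)
    ((\<lambda>k. - norm_slope k\<^sub>0 k) ` Z))"
  have Z: "finite Z" "card Z \<le> 4"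
    unfolding Z_def using offset_cofactor_zeros_along_slope by blast+
  then have "finite B" "card B < card {x. \<sigma> x = x}"
    unfolding B_def using assms(1) card_image_le[OF Z(1), of "\<lambda>k. - norm_slope k\<^sub>0 k"]
    by (simp_all add: card_insert_if)
  then obtain c where c: "\<sigma> c = c" "c \<notin> B"
    using ex_in_diff_if_card_less by blast
  have "t c \<noteq> 1"
  proof
    assume "t c = 1"
    then have "c = - (n + 1) / k\<^sub>0"
      using assms(3) unfolding t_def n_def by (simp add: field_simps)
    then show False
      using c(2) unfolding B_def by simp
  qed
  moreover have "offset_cofactor c (t c) k \<noteq> 0" if k: "\<sigma> k = k" "defect_slope c (t c) k = 0" for k
  proof (cases "k = k\<^sub>0")
    case True
    then show ?thesis
      using c(2) offset_cofactor_at_base_eq_0_iff[OF assms(4)] unfolding B_def t_def n_def by auto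
  next
    case False
    then have c_eq: "c = - norm_slope k\<^sub>0 k"
      using k defect_slope_through_base[OF k(1) assms(2), of c] unfolding t_def
      by (simp add: eq_neg_iff_add_eq_0 add.commute)
    then have "k \<notin> Z"
      using c(2) unfolding B_def by auto
    then show ?thesis
      unfolding Z_def t_def n_def c_eq by (simp add: algebra_simps)
  qed
  ultimately show ?thesis
    using c(1) by blast
qed

lemma ex_fixed_linear_avoiding_fixed_points:
  assumes "7 < card {x. \<sigma> x = x}"
  shows "\<exists>f. fixed_linear f \<and> f \<alpha> \<noteq> 1 \<and> (\<forall>k. \<sigma> k = k \<longrightarrow>
    k \<noteq> f (\<alpha>\<^sup>2) + (f (1 / (\<alpha> + k)) + k) * f \<alpha> + k * f (1 / (\<alpha> + k)) * f 1)"
proof -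
  have fin: "finite {x. \<sigma> x = x}"
    using assms by (simp add: card_ge_0_finite)
  obtain k\<^sub>0 where k\<^sub>0: "\<sigma> k\<^sub>0 = k\<^sub>0" "k\<^sub>0 \<noteq> 0" "norm_slope k\<^sub>0 k\<^sub>0 \<noteq> 0"
    using ex_base_point assms by fastforce
  define t where "t c = - Nm (\<alpha> + k\<^sub>0) - k\<^sub>0 * c" for c
  obtain c where c: "\<sigma> c = c" "t c \<noteq> 1"
    "\<And>k. \<sigma> k = k \<Longrightarrow> defect_slope c (t c) k = 0 \<Longrightarrow> offset_cofactor c (t c) k \<noteq> 0"
    using ex_value_at_one[OF assms k\<^sub>0] unfolding t_def by blast
  have "\<sigma> (t c) = t c"
    using c(1) k\<^sub>0(1) by (simp add: t_def hom_simps Nm_fixed)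
  have "defect_slope c (t c) k\<^sub>0 = 0"
    by (simp add: defect_slope_def t_def)
  then obtain s where s: "\<sigma> s = s"
    "\<And>k. \<sigma> k = k \<Longrightarrow> s * defect_slope c (t c) k + defect_offset c (t c) k \<noteq> 0"
    using ex_pencil_nonvanishing[OF fin, of k\<^sub>0 "defect_slope c (t c)" "defect_offset c (t c)"]
      k\<^sub>0(1) c(3) defect_offset_at_root Nm_shift_ne_0 by auto
  obtain f where f: "fixed_linear f" "f 1 = c" "f \<alpha> = t c" "f (\<alpha>\<^sup>2) = s"
    using ex_fixed_linear_with_values[OF c(1) \<open>\<sigma> (t c) = t c\<close> s(1)] by blast
  have "k \<noteq> f (\<alpha>\<^sup>2) + (f (1 / (\<alpha> + k)) + k) * f \<alpha> + k * f (1 / (\<alpha> + k)) * f 1"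
    if "\<sigma> k = k" for k
    using defect_eq[OF f(1) that] s(2)[OF that] f(2-4) by auto
  then show ?thesis
    using f(1,3) c(2) by (intro exI[of _ f]) auto
qed

end

lemma prime_power_gt_1: "prime_power q \<Longrightarrow> 1 < q"
  unfolding prime_power_def using one_less_power prime_gt_1_nat by blast

lemma order3_automorphism_frobenius:
  assumes "prime_power q" "card (UNIV :: 'a::{field,finite} set) = q ^ 3"
  shows "order3_automorphism (\<lambda>x::'a. x ^ q)"
proof -
  obtain p e where pe: "prime p" "e > 0" "q = p ^ e"
    using assms(1) unfolding prime_power_def by blast
  have "card (UNIV :: 'a set) = p ^ (e * 3)"
    using assms(2) pe(3) by (simp add: power_mult)
  then have "CHAR('a) = p"
    using CHAR_eq_if_card_eq_prime_power[where 'a = 'a, of p "e * 3"] pe(1,2) by simp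
  then have add: "(x + y) ^ q = x ^ q + y ^ q" for x y :: 'a
    using freshmans_dream'[of q e x y] pe by simp
  have cube: "((x ^ q) ^ q) ^ q = x" for x :: 'a
    using power_card_UNIV_eq_self[of x] assms(2) by (simp add: power3_eq_cube flip: power_mult)
  show ?thesis
    by unfold_locales (simp_all add: add cube power_mult_distrib)
qed

lemma card_fixed_frobenius:
  assumes "prime_power q" "card (UNIV :: 'a::{field,finite} set) = q ^ 3"
  shows "card {x::'a. x ^ q = x} = q"
proof -
  interpret order3_automorphism "\<lambda>x::'a. x ^ q"
    using order3_automorphism_frobenius assms .
  have "q > 1"
    using prime_power_gt_1 assms(1) .
  have "{x::'a. x ^ q = x} = {x. x ^ q + poly [:0, -1:] x = 0}"
    by simp
  then have upper: "card {x::'a. x ^ q = x} \<le> q"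
    using card_roots_monic_le[of "[:0, -1:]" q] \<open>q > 1\<close> by simp
  define P where "P = Polynomial.monom (1::'a) q + [:0, 1:]"
  have "degree P = q"
    unfolding P_def using \<open>q > 1\<close> by (simp add: degree_add_eq_left degree_monom_eq)
  then have "card {y. y ^ (q * q) + poly P y = 0} \<le> q * q"
    using card_roots_monic_le[of P "q * q"] \<open>q > 1\<close> by simp
  moreover have "{y. Tr y = 0} = {y. y ^ (q * q) + poly P y = 0}"
    by (auto simp: P_def Tr_def poly_monom power_mult algebra_simps)
  ultimately have "card {y. Tr y = 0} \<le> q * q"
    by simp
  have "q * (q * q) \<le> card {x::'a. x ^ q = x} * card {y. Tr y = 0}"
    using card_UNIV_le_card_fixed_times_card_Tr_kernel assms(2) by (simp add: power3_eq_cube)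
  also have "\<dots> \<le> card {x::'a. x ^ q = x} * (q * q)"
    using \<open>card {y. Tr y = 0} \<le> q * q\<close> by (rule mult_le_mono2)
  finally have "q \<le> card {x::'a. x ^ q = x}"
    using \<open>q > 1\<close> by simp
  then show ?thesis
    using upper by simp
qed

theorem proposition4p6:
  fixes q :: nat
  assumes "prime_power q" and "q > 10"
    and "card (UNIV :: 'a::{field,finite} set) = q ^ 3"
  shows "\<exists>(\<alpha>::'a) f. \<alpha> \<notin> base_subfield q \<and> fq_linear_functional q f \<and>
           (let \<beta> = (1::'a) in
              f (\<alpha> / \<beta>) \<noteq> 1 \<and>
              (\<forall>k \<in> base_subfield q.
                 k \<noteq> f (\<alpha>^2 / \<beta>) + (f (\<beta>^2 / (\<alpha> + k)) + k) * f (\<alpha> / \<beta>)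
                      + k * f (\<beta>^2 / (\<alpha> + k)) * f (1 / \<beta>)))"
proof -
  interpret order3_automorphism "\<lambda>x::'a. x ^ q"
    using order3_automorphism_frobenius assms(1,3) .
  have card_fixed: "card {x::'a. x ^ q = x} = q"
    using card_fixed_frobenius assms(1,3) .
  have "q < q ^ 3"
    using power_strict_increasing[of 1 3 q] assms(2) by simp
  then have "{x::'a. x ^ q = x} \<noteq> UNIV"
    using card_fixed assms(3) by auto
  then obtain \<alpha> :: 'a where \<alpha>: "\<alpha> ^ q \<noteq> \<alpha>"
    by blast
  interpret order3_automorphism_nonfixed "\<lambda>x::'a. x ^ q" \<alpha>
    using \<alpha> by unfold_locales
  obtain f where "fixed_linear f" "f \<alpha> \<noteq> 1"
    "\<forall>k. k ^ q = k \<longrightarrow> k \<noteq> f (\<alpha>\<^sup>2) + (f (1 / (\<alpha> + k)) + k) * f \<alpha> + k * f (1 / (\<alpha> + k)) * f 1"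
    using ex_fixed_linear_avoiding_fixed_points card_fixed assms(2) by auto
  moreover have "fixed_linear f \<longleftrightarrow> fq_linear_functional q f"
    unfolding fixed_linear_def fq_linear_functional_def base_subfield_def by simp
  ultimately show ?thesis
    using \<alpha> unfolding base_subfield_def Let_def by (intro exI[of _ \<alpha>] exI[of _ f]) auto
qed

end
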